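(* Let $G$ be a finite group and $p$ a prime with $\gcd(p-1,|G|)=1$. If $|G'|=p^2$ and $|G'\cap Z(G)|=p$, then $G$ is nilpotent of class $3$; in particular $G\cong P\times A$, where $A$ is an abelian group and $P$ is a $p$-group with $|P'|=p^2$ and $|P'\cap Z(P)|=p$.
   Context: $G'$ denotes the commutator subgroup and $Z(G)$ the center of $G$. *)

theory Defs
  imports "HOL-Algebra.Algebra"
begin

definition center :: "('a, 'b) monoid_scheme \<Rightarrow> 'a set" where
  "center G = {z \<in> carrier G. \<forall>x \<in> carrier G. z \<otimes>\<^bsub>G\<^esub> x = x \<otimes>\<^bsub>G\<^esub> z}"

definition comm_subgroup :: "('a, 'b) monoid_scheme \<Rightarrow> 'a set \<Rightarrow> 'a set \<Rightarrow> 'a set" where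
  "comm_subgroup G H K = generate G
     (\<Union>h \<in> H. \<Union>k \<in> K. {h \<otimes>\<^bsub>G\<^esub> k \<otimes>\<^bsub>G\<^esub> inv\<^bsub>G\<^esub> h \<otimes>\<^bsub>G\<^esub> inv\<^bsub>G\<^esub> k})"

text \<open>Lower central series, indexed from 0: gamma 0 = G, gamma (n+1) = [gamma n, G].
  (In the usual 1-based indexing this is gamma_(n+1).)\<close>
fun lower_central :: "('a, 'b) monoid_scheme \<Rightarrow> nat \<Rightarrow> 'a set" where
  "lower_central G 0 = carrier G"
| "lower_central G (Suc n) = comm_subgroup G (lower_central G n) (carrier G)"

definition nilpotent_of_class :: "('a, 'b) monoid_scheme \<Rightarrow> nat \<Rightarrow> bool" where
  "nilpotent_of_class G c \<longleftrightarrow>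
     lower_central G c = {\<one>\<^bsub>G\<^esub>} \<and> (\<forall>k < c. lower_central G k \<noteq> {\<one>\<^bsub>G\<^esub>})"

end

theory Submission
  imports Defs "HOL-Number_Theory.Number_Theory"
begin

text \<open>Write \<open>D = G'\<close> and \<open>Z0 = G' \<inter> Z(G)\<close>. For \<open>y \<in> D - Z0\<close> the cosets \<open>y\<^sup>i Z0\<close>, \<open>i < p\<close>,
  exhaust \<open>D\<close>, so conjugation by \<open>g\<close> sends \<open>y\<close> to \<open>y\<^sup>a z\<close> with \<open>z \<in> Z0\<close>. Iterating \<open>ord g\<close> times
  gives \<open>a\<^bsup>ord g\<^esup> \<equiv> 1 (mod p)\<close>; since \<open>ord g\<close> divides \<open>|G|\<close>, which is prime to \<open>p - 1\<close>,
  Fermat forces \<open>a \<equiv> 1\<close>. Hence \<open>[G', G] \<subseteq> Z0\<close> is central but nontrivial (as \<open>G' \<noteq> Z0\<close>),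
  and \<open>G\<close> has class 3.
  The same computation shows that an element of order prime to \<open>p\<close> centralises \<open>y\<close>,
  then \<open>D\<close>, then all of \<open>G\<close>. So the \<open>p'\<close>-elements form a central subgroup \<open>A\<close>, and \<open>G\<close> is the
  direct product of \<open>A\<close> with the \<open>p\<close>-elements \<open>P\<close>, which form a subgroup because \<open>G/G'\<close> is
  abelian and \<open>G'\<close> is a \<open>p\<close>-group. Central factors do not change commutators, so \<open>P' = G'\<close>
  and \<open>Z(P) = Z(G) \<inter> P\<close>.\<close>

lemma cong_one_if_pow_cong_one_coprime:
  fixes a N p :: nat
  assumes "Factorial_Ring.prime p" "\<not> p dvd a" "coprime N (p - 1)" "[a ^ N = 1] (mod p)"
  shows "[a = 1] (mod p)"
proof -
  have "ord p a dvd N" using assms(4) ord_divides by blast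
  moreover have "ord p a dvd p - 1" using fermat_theorem[OF assms(1,2)] ord_divides by blast
  ultimately have "ord p a dvd gcd N (p - 1)" by (rule gcd_greatest)
  hence "ord p a dvd 1" by (simp only: assms(3)[unfolded coprime_iff_gcd_eq_1])
  hence "ord p a = 1" by simp
  thus ?thesis using ord_eq_Suc_0_iff by simp
qed

context group
begin

lemma inv_mult_cancel_left: "x \<in> carrier G \<Longrightarrow> y \<in> carrier G \<Longrightarrow> inv x \<otimes> (x \<otimes> y) = y"
  by (simp add: m_assoc[symmetric])

lemma mult_inv_cancel_left: "x \<in> carrier G \<Longrightarrow> y \<in> carrier G \<Longrightarrow> x \<otimes> (inv x \<otimes> y) = y"
  by (simp add: m_assoc[symmetric])

lemma subgroup_nat_pow_closed: "subgroup H G \<Longrightarrow> x \<in> H \<Longrightarrow> x [^] (n::nat) \<in> H"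
  by (induction n) (auto simp: subgroup.one_closed subgroup.m_closed)

lemma center_closed: "z \<in> center G \<Longrightarrow> z \<in> carrier G"
  unfolding center_def by simp

lemma center_commute: "z \<in> center G \<Longrightarrow> x \<in> carrier G \<Longrightarrow> z \<otimes> x = x \<otimes> z"
  unfolding center_def by simp

lemma centerI: "z \<in> carrier G \<Longrightarrow> (\<And>x. x \<in> carrier G \<Longrightarrow> z \<otimes> x = x \<otimes> z) \<Longrightarrow> z \<in> center G"
  unfolding center_def by simp

lemma center_subgroup: "subgroup (center G) G"
proof (rule subgroupI)
  show "center G \<subseteq> carrier G" using center_closed by blast
  show "center G \<noteq> {}" using centerI[OF one_closed] by auto
  fix a b assume a: "a \<in> center G" and b: "b \<in> center G"
  have ac: "a \<in> carrier G" and bc: "b \<in> carrier G" using a b center_closed by auto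
  show "inv a \<in> center G"
  proof (rule centerI)
    fix x assume x: "x \<in> carrier G"
    have "inv a \<otimes> x = inv a \<otimes> (x \<otimes> a) \<otimes> inv a" using ac x by (simp add: m_assoc)
    also have "\<dots> = x \<otimes> inv a" using ac x by (simp add: center_commute[OF a x, symmetric] inv_mult_cancel_left)
    finally show "inv a \<otimes> x = x \<otimes> inv a" .
  qed (use ac in simp)
  show "a \<otimes> b \<in> center G"
  proof (rule centerI)
    fix x assume x: "x \<in> carrier G"
    have "a \<otimes> b \<otimes> x = a \<otimes> (x \<otimes> b)" using ac bc x by (simp add: m_assoc center_commute[OF b x])
    also have "\<dots> = x \<otimes> (a \<otimes> b)" using ac bc x by (simp add: m_assoc[symmetric] center_commute[OF a x])
    finally show "a \<otimes> b \<otimes> x = x \<otimes> (a \<otimes> b)" .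
  qed (use ac bc in simp)
qed

lemma comm_group_if_subset_center:
  assumes "subgroup H G" "H \<subseteq> center G"
  shows "comm_group (G\<lparr>carrier := H\<rparr>)"
proof (rule group.group_comm_groupI[OF subgroup.subgroup_is_group[OF assms(1) is_group]])
  fix x y assume "x \<in> carrier (G\<lparr>carrier := H\<rparr>)" "y \<in> carrier (G\<lparr>carrier := H\<rparr>)"
  hence "x \<in> center G" "y \<in> carrier G" using assms subgroup.subset by auto
  thus "x \<otimes>\<^bsub>G\<lparr>carrier := H\<rparr>\<^esub> y = y \<otimes>\<^bsub>G\<lparr>carrier := H\<rparr>\<^esub> x"
    using center_commute by simp
qed

lemma commute_iff_conj_eq:
  "x \<in> carrier G \<Longrightarrow> g \<in> carrier G \<Longrightarrow> x \<otimes> g \<otimes> inv x = g \<longleftrightarrow> x \<otimes> g = g \<otimes> x"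
  by (metis inv_solve_right' m_closed)

lemma conj_center: "z \<in> center G \<Longrightarrow> g \<in> carrier G \<Longrightarrow> g \<otimes> z \<otimes> inv g = z"
  using commute_iff_conj_eq[OF _ center_closed] center_commute by metis

lemma commutator_eq_one_iff:
  assumes "h \<in> carrier G" "k \<in> carrier G"
  shows "h \<otimes> k \<otimes> inv h \<otimes> inv k = \<one> \<longleftrightarrow> h \<otimes> k = k \<otimes> h"
proof -
  have "h \<otimes> k \<otimes> inv h \<otimes> inv k = \<one> \<longleftrightarrow> h \<otimes> k \<otimes> inv h = k"
    using inv_solve_right'[of \<one> "h \<otimes> k \<otimes> inv h" k] assms by simp
  also have "\<dots> \<longleftrightarrow> h \<otimes> k = k \<otimes> h" by (rule commute_iff_conj_eq[OF assms])
  finally show ?thesis .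
qed

lemma comm_subgroup_eq_one_iff_subset_center:
  assumes "H \<subseteq> carrier G"
  shows "comm_subgroup G H (carrier G) = {\<one>} \<longleftrightarrow> H \<subseteq> center G"
proof
  assume triv: "comm_subgroup G H (carrier G) = {\<one>}"
  show "H \<subseteq> center G"
  proof
    fix h assume h: "h \<in> H"
    hence hc: "h \<in> carrier G" using assms by blast
    have "h \<otimes> k = k \<otimes> h" if k: "k \<in> carrier G" for k
    proof -
      have "h \<otimes> k \<otimes> inv h \<otimes> inv k \<in> comm_subgroup G H (carrier G)"
        unfolding comm_subgroup_def by (rule generate.incl) (use h k in blast)
      thus ?thesis using triv commutator_eq_one_iff[OF hc k] by blast
    qed
    thus "h \<in> center G" by (rule centerI[OF hc])
  qed
next
  assume H: "H \<subseteq> center G"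
  have "h \<otimes> k \<otimes> inv h \<otimes> inv k = \<one>" if "h \<in> H" "k \<in> carrier G" for h k
  proof -
    have hz: "h \<in> center G" using H that(1) by blast
    show ?thesis using commutator_eq_one_iff[OF center_closed[OF hz] that(2)] center_commute[OF hz that(2)] by blast
  qed
  hence "(\<Union>h\<in>H. \<Union>k\<in>carrier G. {h \<otimes> k \<otimes> inv h \<otimes> inv k}) \<subseteq> {\<one>}" by blast
  thus "comm_subgroup G H (carrier G) = {\<one>}"
    unfolding comm_subgroup_def using generate_subgroup_incl[OF _ triv_subgroup] generate.one by blast
qed

lemma conj_mult:
  "g \<in> carrier G \<Longrightarrow> x \<in> carrier G \<Longrightarrow> u \<in> carrier G \<Longrightarrow>
    g \<otimes> (x \<otimes> u) \<otimes> inv g = (g \<otimes> x \<otimes> inv g) \<otimes> (g \<otimes> u \<otimes> inv g)"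
  by (simp add: m_assoc inv_mult_cancel_left)

lemma conj_nat_pow:
  assumes "g \<in> carrier G" "x \<in> carrier G"
  shows "g \<otimes> x [^] (n::nat) \<otimes> inv g = (g \<otimes> x \<otimes> inv g) [^] n"
proof (induction n)
  case (Suc n)
  have "g \<otimes> x [^] Suc n \<otimes> inv g = (g \<otimes> x [^] n \<otimes> inv g) \<otimes> (g \<otimes> x \<otimes> inv g)"
    using assms by (simp add: conj_mult)
  thus ?case using Suc assms by simp
qed (use assms in simp)

lemma conj_by_pow_Suc:
  assumes "x \<in> carrier G" "g \<in> carrier G"
  shows "x [^] Suc j \<otimes> g \<otimes> inv (x [^] Suc j) = x \<otimes> (x [^] j \<otimes> g \<otimes> inv (x [^] j)) \<otimes> inv x"
  unfolding nat_pow_Suc2[OF assms(1)] using assms by (simp add: inv_mult_group m_assoc)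

lemma pow_ord_eq_one_if_conj_eq_mult:
  assumes x: "x \<in> carrier G" and g: "g \<in> carrier G" and c: "c \<in> carrier G"
    and conj: "x \<otimes> g \<otimes> inv x = c \<otimes> g" and comm: "x \<otimes> c = c \<otimes> x"
  shows "c [^] ord x = \<one>"
proof -
  have "x [^] j \<otimes> g \<otimes> inv (x [^] j) = c [^] j \<otimes> g" for j :: nat
  proof (induction j)
    case (Suc j)
    have "x [^] Suc j \<otimes> g \<otimes> inv (x [^] Suc j) = (x \<otimes> c [^] j \<otimes> inv x) \<otimes> (c \<otimes> g)"
      using conj_by_pow_Suc[OF x g] Suc conj_mult[OF x _ g, of "c [^] j"] x c conj by simp
    also have "\<dots> = c [^] Suc j \<otimes> g"
      using conj_nat_pow[OF x c] comm commute_iff_conj_eq[OF x c] c g by (simp add: m_assoc)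
    finally show ?case .
  qed (use g in simp)
  from this[of "ord x"] have "g = c [^] ord x \<otimes> g" using x g by simp
  thus ?thesis using c g by simp
qed

lemma conj_pow_iter_mod_central:
  assumes H: "subgroup H G" "H \<subseteq> center G" and g: "g \<in> carrier G" and y: "y \<in> carrier G"
    and z: "z \<in> H" and conj: "g \<otimes> y \<otimes> inv g = y [^] (a::nat) \<otimes> z"
  shows "\<exists>w\<in>H. g [^] j \<otimes> y \<otimes> inv (g [^] j) = y [^] (a ^ j) \<otimes> w"
proof (induction j)
  case 0 thus ?case using y subgroup.one_closed[OF H(1)] by (intro bexI[of _ \<one>]) auto
next
  case (Suc j)
  then obtain w where w: "w \<in> H" "g [^] j \<otimes> y \<otimes> inv (g [^] j) = y [^] (a ^ j) \<otimes> w" by blast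
  have zc: "z \<in> center G" and wc: "w \<in> center G" using z w H(2) by auto
  have g_w: "g \<otimes> w \<otimes> inv g = w"
    using commute_iff_conj_eq[OF g center_closed[OF wc]] center_commute[OF wc g] by simp
  have "g [^] Suc j \<otimes> y \<otimes> inv (g [^] Suc j) = (g \<otimes> y [^] (a ^ j) \<otimes> inv g) \<otimes> w"
    using conj_by_pow_Suc[OF g y] w(2) conj_mult[OF g _ center_closed[OF wc], of "y [^] (a ^ j)"] y g_w
    by simp
  also have "\<dots> = (y [^] a \<otimes> z) [^] (a ^ j) \<otimes> w" using conj_nat_pow[OF g y] conj by simp
  also have "\<dots> = y [^] (a ^ Suc j) \<otimes> (z [^] (a ^ j) \<otimes> w)"
    using pow_mult_distrib[of "y [^] a" z "a ^ j"] center_commute[OF zc, of "y [^] a"]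
      y center_closed[OF zc] center_closed[OF wc]
    by (simp add: nat_pow_pow m_assoc mult.commute)
  finally show ?case using w(1) z H(1)
    by (intro bexI[of _ "z [^] (a ^ j) \<otimes> w"]) (auto intro: subgroup.m_closed subgroup_nat_pow_closed)
qed

lemma pow_card_subgroup_eq_one:
  assumes "subgroup H G" "finite H" "x \<in> H"
  shows "x [^] card H = \<one>"
proof -
  interpret H: group "G\<lparr>carrier := H\<rparr>" using subgroup.subgroup_is_group[OF assms(1) is_group] .
  have "x [^]\<^bsub>G\<lparr>carrier := H\<rparr>\<^esub> order (G\<lparr>carrier := H\<rparr>) = \<one>"
    using H.pow_order_eq_1 assms(3) by simp
  thus ?thesis by (simp add: order_def nat_pow_consistent[symmetric])
qed

lemma eq_one_if_pow_eq_one_coprime: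
  assumes "x \<in> carrier G" "x [^] (a::nat) = \<one>" "x [^] (b::nat) = \<one>" "coprime a b"
  shows "x = \<one>"
proof -
  have "ord x dvd gcd a b" using pow_eq_id assms(1-3) by simp
  hence "ord x = 1" using assms(4) by simp
  thus ?thesis using ord_eq_1 assms(1) by blast
qed

lemma coprime_ord_if_pow_eq_one:
  assumes "x \<in> carrier G" "x [^] n = \<one>" "coprime n p"
  shows "coprime (ord x) p"
proof -
  obtain k where "n = ord x * k" using pow_eq_id assms(1,2) by blast
  thus ?thesis using assms(3) by simp
qed

lemma exists_pow_prime_eq_one:
  assumes "finite (carrier G)" "Factorial_Ring.prime q" "q dvd order G"
  obtains x where "x \<in> carrier G" "x \<noteq> \<one>" "x [^] q = \<one>"
proof -
  obtain m where m: "order G = q ^ 1 * m" using assms(3) by auto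
  have "sylow G q 1 m" unfolding sylow_eq sylow_axioms_def using assms m is_group by auto
  then obtain H where H: "subgroup H G" "card H = q" using sylow.sylow_thm by fastforce
  have "finite H" using H assms(1) subgroup.subset finite_subset by metis
  have "H \<noteq> {\<one>}" using H prime_gt_1_nat[OF assms(2)] by auto
  then obtain x where x: "x \<in> H" "x \<noteq> \<one>" using subgroup.one_closed[OF H(1)] by blast
  show thesis using that x H subgroup.subset pow_card_subgroup_eq_one[OF H(1) \<open>finite H\<close> x(1)] by blast
qed

lemma order_eq_prime_power_if_pow_prime_power_eq_one:
  assumes "finite (carrier G)" "Factorial_Ring.prime p"
    and "\<And>x. x \<in> carrier G \<Longrightarrow> \<exists>j. x [^] (p ^ j) = \<one>"
  shows "\<exists>k. order G = p ^ k"
proof -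
  have "order G \<noteq> 0" using assms(1) order_gt_0_iff_finite by auto
  then obtain r where r: "order G = p ^ multiplicity p (order G) * r" "\<not> p dvd r"
    using multiplicity_decompose'[of "order G" p] prime_gt_1_nat[OF assms(2)] by auto
  have "r = 1"
  proof (rule ccontr)
    assume "r \<noteq> 1"
    then obtain q where q: "Factorial_Ring.prime q" "q dvd r" using prime_factor_nat by blast
    hence "q dvd order G" using r(1) by (metis dvd_mult)
    then obtain x where x: "x \<in> carrier G" "x \<noteq> \<one>" "x [^] q = \<one>"
      using exists_pow_prime_eq_one[OF assms(1) q(1)] by blast
    obtain j where "x [^] (p ^ j) = \<one>" using assms(3) x(1) by blast
    moreover have "coprime q (p ^ j)"
      using primes_coprime[OF q(1) assms(2)] q r(2) by auto
    ultimately show False using eq_one_if_pow_eq_one_coprime x by blast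
  qed
  thus ?thesis using r(1) by auto
qed

lemma prime_power_coprime_decomposition:
  assumes "finite (carrier G)" "Factorial_Ring.prime p" and g: "g \<in> carrier G"
  obtains a b where "a \<in> carrier G" "b \<in> carrier G" "\<exists>j. a [^] (p ^ j) = \<one>" "coprime (ord b) p" "g = a \<otimes> b"
proof -
  have "ord g \<noteq> 0" using ord_ge_1[OF assms(1) g] by simp
  then obtain r where r: "ord g = p ^ multiplicity p (ord g) * r" "\<not> p dvd r"
    using multiplicity_decompose'[of "ord g" p] prime_gt_1_nat[OF assms(2)] by auto
  define j where "j = multiplicity p (ord g)"
  have "coprime (p ^ j) r" using prime_imp_coprime[OF assms(2) r(2)] by simp
  moreover have "p ^ j \<noteq> 0" using prime_gt_0_nat[OF assms(2)] by simp
  ultimately obtain s t where st: "p ^ j * s = Suc (r * t)" using bezout_nat[of "p ^ j" r] by auto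
  define a where "a = inv (g [^] (r * t))"
  define b where "b = g [^] (p ^ j * s)"
  have ord_g: "ord g = p ^ j * r" using r(1) unfolding j_def .
  have "a [^] (p ^ j) = inv ((g [^] ord g) [^] t)"
    unfolding a_def ord_g using g by (simp add: nat_pow_inv nat_pow_pow ac_simps)
  hence "a [^] (p ^ j) = \<one>" using g by simp
  moreover have "b [^] r = (g [^] ord g) [^] s" unfolding b_def ord_g using g by (simp add: nat_pow_pow ac_simps)
  hence "coprime (ord b) p"
    using coprime_ord_if_pow_eq_one[of b r p] g prime_imp_coprime[OF assms(2) r(2)]
    unfolding b_def by (simp add: coprime_commute)
  moreover have "g = a \<otimes> b" unfolding a_def b_def st using g by (simp add: m_assoc[symmetric])
  ultimately show thesis using that[of a b] g unfolding a_def b_def by blast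
qed

lemma pow_mem_subgroup_iff_dvd:
  assumes H: "subgroup H G" and y: "y \<in> carrier G" and n: "0 < n" "y [^] (n::nat) \<in> H"
  obtains e where "0 < e" "\<And>i. y [^] (i::nat) \<in> H \<longleftrightarrow> e dvd i"
proof -
  define e where "e = (LEAST k::nat. 0 < k \<and> y [^] k \<in> H)"
  have e: "0 < e" "y [^] e \<in> H" using LeastI[of "\<lambda>k. 0 < k \<and> y [^] k \<in> H"] n unfolding e_def by blast+
  have e_min: "y [^] r \<notin> H" if "0 < r" "r < e" for r
    using not_less_Least[of r "\<lambda>k. 0 < k \<and> y [^] k \<in> H"] that unfolding e_def by blast
  have "y [^] i \<in> H \<longleftrightarrow> e dvd i" for i
  proof
    assume "e dvd i"
    then obtain q where "i = e * q" by blast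
    thus "y [^] i \<in> H" using subgroup_nat_pow_closed[OF H e(2)] y by (simp add: nat_pow_pow)
  next
    assume i: "y [^] i \<in> H"
    have yq: "y [^] (e * (i div e)) \<in> H" using subgroup_nat_pow_closed[OF H e(2)] y by (simp add: nat_pow_pow)
    have "y [^] i = y [^] (e * (i div e)) \<otimes> y [^] (i mod e)" using y by (simp add: nat_pow_mult)
    hence "y [^] (i mod e) = inv (y [^] (e * (i div e))) \<otimes> y [^] i" using y by (simp add: inv_solve_left)
    hence "y [^] (i mod e) \<in> H" using yq i H by (simp add: subgroup.m_closed subgroup.m_inv_closed)
    thus "e dvd i" using e_min[of "i mod e"] e(1) by (auto simp: mod_eq_0_iff_dvd)
  qed
  thus thesis using that e(1) by blast
qed

lemma inj_on_pow_mult_subgroup: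
  assumes H: "subgroup H G" and y: "y \<in> carrier G" and e: "\<And>i. y [^] (i::nat) \<in> H \<longleftrightarrow> e dvd i"
  shows "inj_on (\<lambda>(i, h). y [^] i \<otimes> h) ({..<e} \<times> H)"
proof -
  have key: "i = j \<and> h = h'"
    if "j < e" "h \<in> H" "h' \<in> H" "y [^] i \<otimes> h = y [^] j \<otimes> h'" "i \<le> j" for i j h h'
  proof -
    have hc: "h \<in> carrier G" "h' \<in> carrier G" using that(2,3) subgroup.subset[OF H] by auto
    have "y [^] j = y [^] i \<otimes> y [^] (j - i)" using that(5) y by (simp add: nat_pow_mult)
    hence "y [^] i \<otimes> h = y [^] i \<otimes> (y [^] (j - i) \<otimes> h')" using that(4) y hc by (simp add: m_assoc)
    hence h: "h = y [^] (j - i) \<otimes> h'" using y hc by simp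
    hence "y [^] (j - i) = h \<otimes> inv h'" using y hc by (simp add: inv_solve_right)
    hence "y [^] (j - i) \<in> H" using that(2,3) H by (simp add: subgroup.m_closed subgroup.m_inv_closed)
    hence "e dvd j - i" using e by blast
    moreover have "j - i < e" using that(1) by linarith
    ultimately have "j - i = 0" using nat_dvd_not_less[of "j - i" e] by auto
    hence "i = j" using that(5) by simp
    thus ?thesis using h hc by simp
  qed
  show ?thesis
  proof (rule inj_onI)
    fix x x' assume x: "x \<in> {..<e} \<times> H" and x': "x' \<in> {..<e} \<times> H"
      and eq: "(\<lambda>(i, h). y [^] i \<otimes> h) x = (\<lambda>(i, h). y [^] i \<otimes> h) x'"
    obtain i h j h' where "x = (i, h)" "x' = (j, h')" by (cases x, cases x')
    with x x' eq key[of j h h' i] key[of i h' h j] show "x = x'" by (cases "i \<le> j") auto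
  qed
qed

lemma subgroup_prime_square_pow_cosets:
  assumes H: "subgroup H G" and K: "subgroup K G" "finite K" and HK: "H \<subseteq> K"
    and p: "Factorial_Ring.prime p" and card: "card K = p ^ 2" "card H = p"
    and y: "y \<in> K" "y \<notin> H"
  shows "y [^] (i::nat) \<in> H \<longleftrightarrow> p dvd i"
    and "K = (\<lambda>(i, h). y [^] i \<otimes> h) ` ({..<p} \<times> H)"
proof -
  have yc: "y \<in> carrier G" using y K subgroup.subset by blast
  have "y [^] (p ^ 2) \<in> H"
    using pow_card_subgroup_eq_one[OF K y(1)] card subgroup.one_closed[OF H] by simp
  then obtain e where e: "0 < e" "\<And>i. y [^] (i::nat) \<in> H \<longleftrightarrow> e dvd i"
    using pow_mem_subgroup_iff_dvd[OF H yc] prime_gt_0_nat[OF p] by (metis zero_less_power)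
  let ?R = "(\<lambda>(i, h). y [^] i \<otimes> h) ` ({..<e} \<times> H)"
  have card_R: "card ?R = e * p"
    using card_image[OF inj_on_pow_mult_subgroup[OF H yc e(2)]] card by (simp add: card_cartesian_product)
  have R_K: "?R \<subseteq> K" using subgroup_nat_pow_closed[OF K(1) y(1)] HK K(1) by (auto intro!: subgroup.m_closed)
  have "e * p \<le> p * p" using card_mono[OF K(2) R_K] card_R card by (simp add: power2_eq_square)
  hence "e \<le> p" using prime_gt_0_nat[OF p] by simp
  moreover have "e dvd p ^ 2" using e(2) \<open>y [^] (p ^ 2) \<in> H\<close> by blast
  then obtain k where k: "k \<le> 2" "e = p ^ k" using divides_primepow_nat[OF p] by auto
  moreover have "e \<noteq> 1" using e(2)[of 1] y(2) yc by auto
  ultimately have "e = p" using prime_gt_1_nat[OF p] 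
    by (cases k) (auto simp: numeral_2_eq_2 le_Suc_eq power2_eq_square)
  thus "y [^] i \<in> H \<longleftrightarrow> p dvd i" using e(2) by simp
  show "K = (\<lambda>(i, h). y [^] i \<otimes> h) ` ({..<p} \<times> H)"
    using card_subset_eq[OF K(2) R_K] card_R card \<open>e = p\<close> by (simp add: power2_eq_square)
qed

lemma pow_mult_mem_derived:
  assumes "x \<in> carrier G" "y \<in> carrier G" "x [^] (n::nat) = \<one>" "y [^] n = \<one>"
  shows "(x \<otimes> y) [^] n \<in> derived G (carrier G)"
proof -
  let ?D = "derived G (carrier G)"
  interpret N: normal ?D G by (rule derived_self_is_normal)
  interpret Q: comm_group "G Mod ?D" by (rule derived_quot_is_comm_group)
  have h: "(\<lambda>a. ?D #> a) \<in> hom G (G Mod ?D)" by (rule N.r_coset_hom_Mod)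
  have hx: "?D #> x \<in> carrier (G Mod ?D)" "?D #> y \<in> carrier (G Mod ?D)"
    using h assms(1,2) unfolding hom_def by auto
  have "?D #> ((x \<otimes> y) [^] n) = ((?D #> x) \<otimes>\<^bsub>G Mod ?D\<^esub> (?D #> y)) [^]\<^bsub>G Mod ?D\<^esub> n"
    using hom_nat_pow[OF h _ is_group Q.is_group] hom_mult[OF h] assms(1,2) by simp
  also have "\<dots> = (?D #> x [^] n) \<otimes>\<^bsub>G Mod ?D\<^esub> (?D #> y [^] n)"
    using Q.pow_mult_distrib[OF Q.m_comm[OF hx] hx] assms(1,2)
    by (simp add: hom_nat_pow[OF h _ is_group Q.is_group])
  also have "\<dots> = ?D" using assms(3,4) N.subset coset_mult_one subgroup_mult_id[OF N.subgroup_axioms] by simp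
  finally show ?thesis using rcos_self[OF _ N.subgroup_axioms, of "(x \<otimes> y) [^] n"] assms(1,2) by simp
qed

lemma commutator_mult_central:
  assumes a: "a1 \<in> carrier G" "a2 \<in> carrier G" and b: "b1 \<in> center G" "b2 \<in> center G"
  shows "(a1 \<otimes> b1) \<otimes> (a2 \<otimes> b2) \<otimes> inv (a1 \<otimes> b1) \<otimes> inv (a2 \<otimes> b2) = a1 \<otimes> a2 \<otimes> inv a1 \<otimes> inv a2"
proof -
  have bc: "b1 \<in> carrier G" "b2 \<in> carrier G" using b center_closed by auto
  note comm = center_commute[OF b(1) a(2)] center_commute[OF b(2) a(1)] center_commute[OF b(2) bc(1)]
  have "a1 \<otimes> b1 \<otimes> (a2 \<otimes> b2) = a1 \<otimes> (b1 \<otimes> a2) \<otimes> b2"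
    "a2 \<otimes> b2 \<otimes> (a1 \<otimes> b1) = a2 \<otimes> (b2 \<otimes> a1) \<otimes> b1"
    using a bc by (simp_all add: m_assoc)
  hence e: "a1 \<otimes> b1 \<otimes> (a2 \<otimes> b2) = a1 \<otimes> a2 \<otimes> (b1 \<otimes> b2)"
    "a2 \<otimes> b2 \<otimes> (a1 \<otimes> b1) = a2 \<otimes> a1 \<otimes> (b2 \<otimes> b1)"
    using a bc by (simp_all add: comm m_assoc)
  have "(a1 \<otimes> b1) \<otimes> (a2 \<otimes> b2) \<otimes> inv (a1 \<otimes> b1) \<otimes> inv (a2 \<otimes> b2)
      = (a1 \<otimes> b1 \<otimes> (a2 \<otimes> b2)) \<otimes> inv (a2 \<otimes> b2 \<otimes> (a1 \<otimes> b1))"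
    using a bc by (simp add: m_assoc inv_mult_group)
  also have "\<dots> = (a1 \<otimes> a2 \<otimes> (b1 \<otimes> b2)) \<otimes> inv (a2 \<otimes> a1 \<otimes> (b1 \<otimes> b2))"
    unfolding e comm(3) ..
  also have "\<dots> = a1 \<otimes> a2 \<otimes> inv a1 \<otimes> inv a2"
    using a bc by (simp add: m_assoc inv_mult_group mult_inv_cancel_left)
  finally show ?thesis .
qed

lemma set_multE:
  assumes "x \<in> H <#> K"
  obtains h k where "h \<in> H" "k \<in> K" "x = h \<otimes> k"
  using assms unfolding set_mult_def by blast

lemma subgroup_generated_eq_restrict: "subgroup H G \<Longrightarrow> subgroup_generated G H = G\<lparr>carrier := H\<rparr>"
  using subgroup.carrier_subgroup_generated_subgroup[of H G]
  unfolding subgroup_generated_def carrier_subgroup_generated by simp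

lemma central_product_iso:
  assumes P: "subgroup P G" and A: "subgroup A G" "A \<subseteq> center G"
    and PA: "P \<inter> A = {\<one>}" "P <#> A = carrier G"
  shows "G \<cong> G\<lparr>carrier := P\<rparr> \<times>\<times> G\<lparr>carrier := A\<rparr>"
proof -
  interpret group_disjoint_sum G P A by (simp add: group_disjoint_sum_def is_group P A(1))
  have "\<forall>x\<in>P. \<forall>y\<in>A. x \<otimes> y = y \<otimes> x"
    using A(2) subgroup.subset[OF P] center_commute by (metis subsetD)
  hence "(\<lambda>(x, y). x \<otimes> y) \<in> iso (G\<lparr>carrier := P\<rparr> \<times>\<times> G\<lparr>carrier := A\<rparr>) G"
    using iso_group_mul_alt PA
    by (simp add: subgroup_generated_eq_restrict[OF P] subgroup_generated_eq_restrict[OF A(1)])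
  thus ?thesis
    using group.iso_sym[OF DirProd_group] subgroup.subgroup_is_group[OF P is_group]
      subgroup.subgroup_is_group[OF A(1) is_group] is_isoI by blast
qed

lemma derived_central_product:
  assumes P: "subgroup P G" and A: "A \<subseteq> center G" and PA: "P <#> A = carrier G"
  shows "derived G (carrier G) = derived (G\<lparr>carrier := P\<rparr>) P"
proof -
  have "derived_set G (carrier G) = derived_set G P"
  proof
    show "derived_set G P \<subseteq> derived_set G (carrier G)" using subgroup.subset[OF P] by blast
    show "derived_set G (carrier G) \<subseteq> derived_set G P"
    proof clarify
      fix g1 g2 assume g: "g1 \<in> carrier G" "g2 \<in> carrier G"
      obtain a1 b1 where ab1: "a1 \<in> P" "b1 \<in> A" "g1 = a1 \<otimes> b1" using g(1)[folded PA] by (rule set_multE)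
      obtain a2 b2 where ab2: "a2 \<in> P" "b2 \<in> A" "g2 = a2 \<otimes> b2" using g(2)[folded PA] by (rule set_multE)
      have "g1 \<otimes> g2 \<otimes> inv g1 \<otimes> inv g2 = a1 \<otimes> a2 \<otimes> inv a1 \<otimes> inv a2"
        using ab1 ab2 commutator_mult_central subgroup.subset[OF P] A by blast
      thus "g1 \<otimes> g2 \<otimes> inv g1 \<otimes> inv g2 \<in> derived_set G P" using ab1 ab2 by blast
    qed
  qed
  thus ?thesis using derived_consistent[OF order_refl P] unfolding derived_def by simp
qed

lemma center_central_product:
  assumes P: "subgroup P G" and A: "A \<subseteq> center G" and PA: "P <#> A = carrier G"
  shows "center (G\<lparr>carrier := P\<rparr>) = center G \<inter> P"
proof
  show "center G \<inter> P \<subseteq> center (G\<lparr>carrier := P\<rparr>)"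
    using subgroup.subset[OF P] unfolding center_def by auto
  show "center (G\<lparr>carrier := P\<rparr>) \<subseteq> center G \<inter> P"
  proof
    fix z assume "z \<in> center (G\<lparr>carrier := P\<rparr>)"
    hence z: "z \<in> P" "\<And>x. x \<in> P \<Longrightarrow> z \<otimes> x = x \<otimes> z" unfolding center_def by auto
    have zc: "z \<in> carrier G" using z(1) subgroup.subset[OF P] by blast
    have z_ab: "z \<otimes> (a \<otimes> b) = (a \<otimes> b) \<otimes> z" if "a \<in> P" "b \<in> A" for a b
    proof -
      have b: "b \<in> center G" using that(2) A by blast
      have a: "a \<in> carrier G" using that(1) subgroup.subset[OF P] by blast
      have bc: "b \<in> carrier G" using center_closed[OF b] .
      have "z \<otimes> (a \<otimes> b) = (z \<otimes> a) \<otimes> b" using zc a bc by (simp only: m_assoc)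
      also have "\<dots> = a \<otimes> (z \<otimes> b)" using zc a bc by (simp only: z(2)[OF that(1)] m_assoc)
      also have "\<dots> = (a \<otimes> b) \<otimes> z" using zc a bc by (simp only: center_commute[OF b zc, symmetric] m_assoc)
      finally show ?thesis .
    qed
    have "z \<otimes> g = g \<otimes> z" if "g \<in> carrier G" for g
      using that[folded PA] by (rule set_multE) (simp add: z_ab)
    hence "z \<in> center G" by (rule centerI[OF zc])
    thus "z \<in> center G \<inter> P" using z(1) by blast
  qed
qed

end

locale derived_order_p_square = group +
  fixes p :: nat
  assumes finite_carrier: "finite (carrier G)"
    and prime_p: "Factorial_Ring.prime p"
    and gcd_p_minus_1_order: "gcd (p - 1) (order G) = 1"
    and card_derived: "card (derived G (carrier G)) = p ^ 2"
    and card_derived_inter_center: "card (derived G (carrier G) \<inter> center G) = p"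
begin

abbreviation D where "D \<equiv> derived G (carrier G)"
abbreviation Z0 where "Z0 \<equiv> D \<inter> center G"

lemma D_subgroup: "subgroup D G"
  by (rule derived_is_subgroup) simp

lemma Z0_subgroup: "subgroup Z0 G"
  by (rule subgroups_Inter_pair[OF D_subgroup center_subgroup])

lemma finite_D: "finite D"
  using finite_carrier subgroup.subset[OF D_subgroup] finite_subset by blast

lemma finite_Z0: "finite Z0"
  using finite_D by blast

lemma pow_p_square_D: "d \<in> D \<Longrightarrow> d [^] (p ^ 2) = \<one>"
  using pow_card_subgroup_eq_one[OF D_subgroup finite_D] card_derived by simp

lemma pow_p_Z0: "z \<in> Z0 \<Longrightarrow> z [^] p = \<one>"
  using pow_card_subgroup_eq_one[OF Z0_subgroup finite_Z0] card_derived_inter_center by simp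

lemma conj_mem_D: "g \<in> carrier G \<Longrightarrow> d \<in> D \<Longrightarrow> g \<otimes> d \<otimes> inv g \<in> D"
  using normal.inv_op_closed2[OF derived_self_is_normal] .

lemma commutator_mem_D: "g \<in> carrier G \<Longrightarrow> h \<in> carrier G \<Longrightarrow> g \<otimes> h \<otimes> inv g \<otimes> inv h \<in> D"
  unfolding derived_def by (rule generate.incl) blast

lemma D_nontrivial: "D \<noteq> {\<one>}"
proof
  assume "D = {\<one>}"
  hence "p * p = 1" using card_derived by (simp add: power2_eq_square)
  thus False using prime_gt_1_nat[OF prime_p] by simp
qed

lemma exists_D_not_Z0: "\<exists>y. y \<in> D \<and> y \<notin> Z0"
proof (rule ccontr)
  assume "\<not> ?thesis"
  hence "card D \<le> card Z0" using card_mono[OF finite_Z0] by blast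
  thus False using card_derived card_derived_inter_center prime_gt_1_nat[OF prime_p]
    by (simp add: power2_eq_square)
qed

lemma D_cosets_Z0:
  assumes "y \<in> D" "y \<notin> Z0"
  shows "y [^] (i::nat) \<in> Z0 \<longleftrightarrow> p dvd i" and "D = (\<lambda>(i, z). y [^] i \<otimes> z) ` ({..<p} \<times> Z0)"
  using subgroup_prime_square_pow_cosets[OF Z0_subgroup D_subgroup finite_D _ prime_p
      card_derived card_derived_inter_center assms]
  by auto

lemma D_elemE:
  assumes "y \<in> D" "y \<notin> Z0" "d \<in> D"
  obtains i z where "i < p" "z \<in> Z0" "d = y [^] i \<otimes> z"
proof -
  from assms(3) D_cosets_Z0(2)[OF assms(1,2)] have "d \<in> (\<lambda>(i, z). y [^] i \<otimes> z) ` ({..<p} \<times> Z0)" by simp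
  then obtain x where "x \<in> {..<p} \<times> Z0" "d = (\<lambda>(i, z). y [^] i \<otimes> z) x" by (rule imageE)
  thus thesis using that by (cases x) auto
qed

lemma coprime_ord_p_minus_1:
  assumes "g \<in> carrier G" shows "coprime (ord g) (p - 1)"
proof -
  have "gcd (ord g) (p - 1) dvd gcd (p - 1) (order G)"
    by (rule gcd_greatest[OF gcd_dvd2 dvd_trans[OF gcd_dvd1 ord_dvd_group_order[OF assms]]])
  hence "gcd (ord g) (p - 1) = 1" by (simp only: gcd_p_minus_1_order nat_dvd_1_iff_1)
  thus ?thesis by (rule gcd_eq_1_imp_coprime)
qed

lemma conj_eq_mult_Z0:
  assumes g: "g \<in> carrier G" and y: "y \<in> D" "y \<notin> Z0"
  shows "\<exists>z\<in>Z0. g \<otimes> y \<otimes> inv g = y \<otimes> z"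
proof -
  \<comment> \<open>Conjugation by \<open>g\<close> acts on \<open>D/Z0\<close>, cyclic of order \<open>p\<close>, as \<open>y \<mapsto> y\<^sup>a\<close>; the rest shows \<open>a = 1\<close>.\<close>
  have yc: "y \<in> carrier G" using y(1) subgroup.subset[OF D_subgroup] by blast
  obtain a z0 where a: "a < p" "z0 \<in> Z0" "g \<otimes> y \<otimes> inv g = y [^] a \<otimes> z0"
    by (rule D_elemE[OF y conj_mem_D[OF g y(1)]])
  have z0: "z0 \<in> center G" "z0 \<in> carrier G" using a(2) center_closed by auto
  have "a \<noteq> 0"
  proof
    assume "a = 0"
    hence "g \<otimes> y = z0 \<otimes> g" using a(3) yc g z0(2) inv_solve_right'[of z0 "g \<otimes> y" g] by simp
    hence "y = z0" using center_commute[OF z0(1) g] yc g z0(2) by simp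
    thus False using y(2) a(2) by simp
  qed
  define N where "N = ord g"
  obtain w where w: "w \<in> Z0" "g [^] N \<otimes> y \<otimes> inv (g [^] N) = y [^] (a ^ N) \<otimes> w"
    using conj_pow_iter_mod_central[OF Z0_subgroup _ g yc a(2,3)] by blast
  have wc: "w \<in> center G" "w \<in> carrier G" using w(1) center_closed by auto
  have pow_aN: "y [^] (a ^ N) = y [^] (a ^ N - 1) \<otimes> y"
    using nat_pow_Suc[of y "a ^ N - 1"] \<open>a \<noteq> 0\<close> by simp
  have "y [^] (a ^ N - 1) \<otimes> w \<otimes> y = y [^] (a ^ N - 1) \<otimes> y \<otimes> w"
    using yc wc(2) center_commute[OF wc(1) yc] by (simp add: m_assoc)
  also have "\<dots> = y [^] (a ^ N) \<otimes> w" by (simp only: pow_aN)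
  also have "\<dots> = y" using w(2) g yc unfolding N_def by simp
  finally have "y [^] (a ^ N - 1) = inv w" using yc wc by (simp add: inv_equality)
  hence "y [^] (a ^ N - 1) \<in> Z0" using w(1) subgroup.m_inv_closed[OF Z0_subgroup] by simp
  hence "[a ^ N = 1] (mod p)" using D_cosets_Z0(1)[OF y] \<open>a \<noteq> 0\<close> by (simp add: cong_altdef_nat)
  hence "[a = 1] (mod p)"
    using cong_one_if_pow_cong_one_coprime[OF prime_p _ coprime_ord_p_minus_1[OF g]] \<open>a \<noteq> 0\<close> a(1)
    unfolding N_def by (simp add: nat_dvd_not_less)
  hence "a = 1" using a(1) \<open>a \<noteq> 0\<close> by (simp add: cong_def)
  thus ?thesis using a(2,3) yc by auto
qed

lemma conj_D_eq_mult_Z0: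
  assumes d: "d \<in> D" and g: "g \<in> carrier G"
  shows "\<exists>c\<in>Z0. g \<otimes> d \<otimes> inv g = d \<otimes> c"
proof -
  obtain y where y: "y \<in> D" "y \<notin> Z0" using exists_D_not_Z0 by blast
  have yc: "y \<in> carrier G" using y(1) subgroup.subset[OF D_subgroup] by blast
  obtain i z where "i < p" and iz: "z \<in> Z0" "d = y [^] i \<otimes> z" by (rule D_elemE[OF y d])
  obtain z1 where z1: "z1 \<in> Z0" "g \<otimes> y \<otimes> inv g = y \<otimes> z1" using conj_eq_mult_Z0[OF g y] by blast
  have zc: "z \<in> center G" "z \<in> carrier G" "z1 \<in> center G" "z1 \<in> carrier G"
    using iz(1) z1(1) center_closed by auto
  have "g \<otimes> d \<otimes> inv g = (g \<otimes> y [^] i \<otimes> inv g) \<otimes> (g \<otimes> z \<otimes> inv g)"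
    using iz(2) conj_mult[OF g _ zc(2), of "y [^] i"] yc by simp
  also have "\<dots> = (y \<otimes> z1) [^] i \<otimes> z" using conj_nat_pow[OF g yc] z1(2) conj_center[OF zc(1) g] by simp
  also have "\<dots> = y [^] i \<otimes> (z \<otimes> z1 [^] i)"
    using pow_mult_distrib[OF center_commute[OF zc(3) yc, symmetric] yc zc(4)]
      center_commute[OF zc(1) nat_pow_closed[OF zc(4)]] yc zc(2,4) by (simp add: m_assoc)
  also have "\<dots> = d \<otimes> z1 [^] i" using iz(2) yc zc(2,4) by (simp add: m_assoc)
  finally show ?thesis using subgroup_nat_pow_closed[OF Z0_subgroup z1(1)] by blast
qed

lemma commutator_D_mem_Z0:
  assumes d: "d \<in> D" and g: "g \<in> carrier G"
  shows "d \<otimes> g \<otimes> inv d \<otimes> inv g \<in> Z0"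
proof -
  obtain c where c: "c \<in> Z0" "g \<otimes> d \<otimes> inv g = d \<otimes> c" using conj_D_eq_mult_Z0[OF d g] by blast
  have dc: "d \<in> carrier G" using d subgroup.subset[OF D_subgroup] by blast
  have cc: "c \<in> center G" "c \<in> carrier G" using c(1) center_closed by auto
  have "d \<otimes> g \<otimes> inv d \<otimes> inv g = d \<otimes> inv (g \<otimes> d \<otimes> inv g)"
    using dc g by (simp add: inv_mult_group m_assoc)
  also have "\<dots> = d \<otimes> inv c \<otimes> inv d" using c(2) dc cc(2) by (simp add: inv_mult_group m_assoc)
  also have "\<dots> = inv c \<otimes> d \<otimes> inv d"
    using center_commute[OF subgroup.m_inv_closed[OF center_subgroup cc(1)] dc] by simp
  also have "\<dots> = inv c" using dc cc(2) by (simp add: m_assoc)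
  finally show ?thesis using c(1) subgroup.m_inv_closed[OF Z0_subgroup] by simp
qed

lemma commute_D_if_coprime_ord:
  assumes x: "x \<in> carrier G" and cop: "coprime (ord x) p" and d: "d \<in> D"
  shows "x \<otimes> d = d \<otimes> x"
proof -
  obtain y where y: "y \<in> D" "y \<notin> Z0" using exists_D_not_Z0 by blast
  have yc: "y \<in> carrier G" using y(1) subgroup.subset[OF D_subgroup] by blast
  obtain z1 where z1: "z1 \<in> Z0" "x \<otimes> y \<otimes> inv x = y \<otimes> z1" using conj_eq_mult_Z0[OF x y] by blast
  have z1c: "z1 \<in> center G" "z1 \<in> carrier G" using z1(1) center_closed by auto
  have "x \<otimes> y \<otimes> inv x = z1 \<otimes> y" using z1(2) center_commute[OF z1c(1) yc] by simp
  hence "z1 [^] ord x = \<one>"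
    by (rule pow_ord_eq_one_if_conj_eq_mult[OF x yc z1c(2)]) (use center_commute[OF z1c(1) x] in simp)
  hence "z1 = \<one>" using eq_one_if_pow_eq_one_coprime[OF z1c(2) _ pow_p_Z0[OF z1(1)] cop] by blast
  hence xy: "x \<otimes> y \<otimes> inv x = y" using z1(2) yc by simp
  obtain i z where "i < p" and iz: "z \<in> Z0" "d = y [^] i \<otimes> z" by (rule D_elemE[OF y d])
  have zc: "z \<in> center G" "z \<in> carrier G" using iz(1) center_closed by auto
  have "x \<otimes> d \<otimes> inv x = (x \<otimes> y [^] i \<otimes> inv x) \<otimes> (x \<otimes> z \<otimes> inv x)"
    using iz(2) conj_mult[OF x _ zc(2), of "y [^] i"] yc by simp
  also have "\<dots> = d" using conj_nat_pow[OF x yc] xy conj_center[OF zc(1) x] iz(2) by simp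
  finally show ?thesis using commute_iff_conj_eq[OF x] d subgroup.subset[OF D_subgroup] by blast
qed

lemma central_if_coprime_ord:
  assumes x: "x \<in> carrier G" and cop: "coprime (ord x) p"
  shows "x \<in> center G"
proof (rule centerI[OF x])
  fix g assume g: "g \<in> carrier G"
  define c where "c = x \<otimes> g \<otimes> inv x \<otimes> inv g"
  have cD: "c \<in> D" unfolding c_def using commutator_mem_D[OF x g] .
  have cc: "c \<in> carrier G" using cD subgroup.subset[OF D_subgroup] by blast
  have xg: "x \<otimes> g \<otimes> inv x = c \<otimes> g" unfolding c_def using x g by (simp add: m_assoc)
  have "c [^] ord x = \<one>"
    by (rule pow_ord_eq_one_if_conj_eq_mult[OF x g cc xg commute_D_if_coprime_ord[OF x cop cD]])
  moreover have "coprime (ord x) (p ^ 2)" using cop by simp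
  ultimately have "c = \<one>" using eq_one_if_pow_eq_one_coprime[OF cc _ pow_p_square_D[OF cD]] by blast
  hence "x \<otimes> g \<otimes> inv x = g" using xg g by simp
  thus "x \<otimes> g = g \<otimes> x" using commute_iff_conj_eq[OF x g] by blast
qed

lemma lower_central_1: "lower_central G 1 = D"
  by (simp add: derived_def comm_subgroup_def)

lemma lower_central_2: "lower_central G 2 = comm_subgroup G D (carrier G)"
proof -
  have "lower_central G 2 = comm_subgroup G (lower_central G 1) (carrier G)" by (simp add: numeral_2_eq_2)
  thus ?thesis by (simp only: lower_central_1)
qed

lemma lower_central_2_subset_Z0: "lower_central G 2 \<subseteq> Z0"
  unfolding lower_central_2 comm_subgroup_def
  by (rule generate_subgroup_incl[OF _ Z0_subgroup]) (use commutator_D_mem_Z0 in blast)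

lemma nilpotent_of_class_3: "nilpotent_of_class G 3"
proof -
  have D_carrier: "D \<subseteq> carrier G" using subgroup.subset[OF D_subgroup] .
  have "lower_central G 3 = comm_subgroup G (lower_central G 2) (carrier G)"
    by (simp add: numeral_3_eq_3 numeral_2_eq_2)
  also have "\<dots> = {\<one>}"
    using comm_subgroup_eq_one_iff_subset_center lower_central_2_subset_Z0 D_carrier by blast
  finally have "lower_central G 3 = {\<one>}" .
  moreover have "lower_central G 2 \<noteq> {\<one>}"
  proof
    assume "lower_central G 2 = {\<one>}"
    hence "D \<subseteq> center G" using comm_subgroup_eq_one_iff_subset_center[OF D_carrier] lower_central_2 by simp
    thus False using exists_D_not_Z0 by blast
  qed
  moreover have "lower_central G 1 \<noteq> {\<one>}" and "lower_central G 0 \<noteq> {\<one>}"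
    using lower_central_1 D_nontrivial D_carrier subgroup.one_closed[OF D_subgroup] by auto
  ultimately show ?thesis unfolding nilpotent_of_class_def
    by (auto simp: less_Suc_eq numeral_3_eq_3 numeral_2_eq_2)
qed

definition p_elements where "p_elements = {x \<in> carrier G. \<exists>j. x [^] (p ^ j) = \<one>}"

definition p'_elements where "p'_elements = {x \<in> carrier G. coprime (ord x) p}"

lemma p'_elements_subset_center: "p'_elements \<subseteq> center G"
  unfolding p'_elements_def using central_if_coprime_ord by blast

lemma p'_elements_subgroup: "subgroup p'_elements G"
proof (rule subgroupI)
  show "p'_elements \<subseteq> carrier G" "p'_elements \<noteq> {}" unfolding p'_elements_def by auto
  fix a b assume a: "a \<in> p'_elements" and b: "b \<in> p'_elements"
  have ac: "a \<in> carrier G" "coprime (ord a) p" and bc: "b \<in> carrier G" "coprime (ord b) p"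
    using a b unfolding p'_elements_def by auto
  show "inv a \<in> p'_elements" using ac unfolding p'_elements_def by simp
  have "a [^] (ord a * ord b) = \<one>" using ac(1) by (simp add: nat_pow_pow[symmetric])
  moreover have "b [^] (ord a * ord b) = \<one>" using bc(1) by (simp add: nat_pow_pow[symmetric] mult.commute[of "ord a"])
  ultimately have "(a \<otimes> b) [^] (ord a * ord b) = \<one>"
    using pow_mult_distrib[OF center_commute[OF subsetD[OF p'_elements_subset_center a] bc(1)] ac(1) bc(1)]
    by simp
  hence "coprime (ord (a \<otimes> b)) p" using coprime_ord_if_pow_eq_one ac bc by simp
  thus "a \<otimes> b \<in> p'_elements" unfolding p'_elements_def using ac(1) bc(1) by simp
qed

lemma p_elements_subgroup: "subgroup p_elements G"
proof (rule subgroupI)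
  show "p_elements \<subseteq> carrier G" "p_elements \<noteq> {}" unfolding p_elements_def by auto
  fix a b assume a: "a \<in> p_elements" and b: "b \<in> p_elements"
  obtain i where ac: "a \<in> carrier G" "a [^] (p ^ i) = \<one>" using a unfolding p_elements_def by auto
  obtain j where bc: "b \<in> carrier G" "b [^] (p ^ j) = \<one>" using b unfolding p_elements_def by auto
  show "inv a \<in> p_elements" unfolding p_elements_def using ac by (auto simp: nat_pow_inv)
  have "a [^] (p ^ (i + j)) = \<one>" using ac by (simp add: power_add nat_pow_pow[symmetric])
  moreover have "b [^] (p ^ (i + j)) = \<one>"
    using bc by (simp add: power_add nat_pow_pow[symmetric] mult.commute[of "p ^ i"])
  ultimately have "(a \<otimes> b) [^] (p ^ (i + j)) \<in> D" using pow_mult_mem_derived ac(1) bc(1) by blast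
  hence "((a \<otimes> b) [^] (p ^ (i + j))) [^] (p ^ 2) = \<one>" by (rule pow_p_square_D)
  moreover have "p ^ (i + j + 2) = p ^ (i + j) * p ^ 2" by (rule power_add)
  ultimately have "(a \<otimes> b) [^] (p ^ (i + j + 2)) = \<one>" using ac(1) bc(1) by (simp only: nat_pow_pow m_closed)
  thus "a \<otimes> b \<in> p_elements" unfolding p_elements_def using ac(1) bc(1) by blast
qed

lemma D_subset_p_elements: "D \<subseteq> p_elements"
  unfolding p_elements_def using subgroup.subset[OF D_subgroup] pow_p_square_D by blast

lemma p_elements_inter_p'_elements: "p_elements \<inter> p'_elements = {\<one>}"
proof -
  have "x = \<one>" if xP: "x \<in> p_elements" and xA: "x \<in> p'_elements" for x
  proof -
    obtain j where x: "x \<in> carrier G" "x [^] (p ^ j) = \<one>" using xP unfolding p_elements_def by auto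
    have "coprime (ord x) (p ^ j)" using xA unfolding p'_elements_def by simp
    thus "x = \<one>" using eq_one_if_pow_eq_one_coprime[OF x(1) pow_ord_eq_1[OF x(1)] x(2)] by blast
  qed
  thus ?thesis using subgroup.one_closed[OF p_elements_subgroup] subgroup.one_closed[OF p'_elements_subgroup]
    by blast
qed

lemma p_elements_mult_p'_elements: "p_elements <#> p'_elements = carrier G"
proof
  show "p_elements <#> p'_elements \<subseteq> carrier G"
    using setmult_subset_G p_elements_subgroup p'_elements_subgroup subgroup.subset by metis
  show "carrier G \<subseteq> p_elements <#> p'_elements"
  proof
    fix g assume "g \<in> carrier G"
    then obtain a b where "a \<in> carrier G" "b \<in> carrier G" "\<exists>j. a [^] (p ^ j) = \<one>" "coprime (ord b) p" "g = a \<otimes> b"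
      by (rule prime_power_coprime_decomposition[OF finite_carrier prime_p])
    thus "g \<in> p_elements <#> p'_elements" unfolding p_elements_def p'_elements_def set_mult_def by blast
  qed
qed

lemma card_p_elements: "\<exists>k. card p_elements = p ^ k"
proof -
  interpret P: group "G\<lparr>carrier := p_elements\<rparr>" by (rule subgroup.subgroup_is_group[OF p_elements_subgroup is_group])
  have "finite p_elements" using finite_carrier subgroup.subset[OF p_elements_subgroup] finite_subset by blast
  moreover have "\<exists>j. x [^]\<^bsub>G\<lparr>carrier := p_elements\<rparr>\<^esub> (p ^ j) = \<one>\<^bsub>G\<lparr>carrier := p_elements\<rparr>\<^esub>"
    if "x \<in> p_elements" for x
    using that unfolding p_elements_def by (simp add: nat_pow_consistent[symmetric])
  ultimately show ?thesis using P.order_eq_prime_power_if_pow_prime_power_eq_one[OF _ prime_p]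
    by (simp add: order_def)
qed

lemma p_elements_direct_factor:
  "subgroup p_elements G \<and> subgroup p'_elements G \<and>
    G \<cong> G\<lparr>carrier := p_elements\<rparr> \<times>\<times> G\<lparr>carrier := p'_elements\<rparr> \<and>
    comm_group (G\<lparr>carrier := p'_elements\<rparr>) \<and>
    (\<exists>k. card p_elements = p ^ k) \<and>
    card (derived (G\<lparr>carrier := p_elements\<rparr>) p_elements) = p ^ 2 \<and>
    card (derived (G\<lparr>carrier := p_elements\<rparr>) p_elements \<inter> center (G\<lparr>carrier := p_elements\<rparr>)) = p"
proof -
  note P = p_elements_subgroup and A = p'_elements_subgroup p'_elements_subset_center
    and PA = p_elements_mult_p'_elements
  have "derived (G\<lparr>carrier := p_elements\<rparr>) p_elements = D"
    using derived_central_product[OF P A(2) PA] by simp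
  moreover have "center (G\<lparr>carrier := p_elements\<rparr>) = center G \<inter> p_elements"
    by (rule center_central_product[OF P A(2) PA])
  moreover have "D \<inter> (center G \<inter> p_elements) = Z0" using D_subset_p_elements by blast
  ultimately show ?thesis
    using P A central_product_iso[OF P A p_elements_inter_p'_elements PA]
      comm_group_if_subset_center[OF A] card_p_elements card_derived card_derived_inter_center
    by simp
qed

end

theorem lemma2p2:
  fixes G :: "('a, 'b) monoid_scheme" and p :: nat
  assumes "group G"
    and "finite (carrier G)"
    and "Factorial_Ring.prime p"
    and "gcd (p - 1) (order G) = 1"
    and "card (derived G (carrier G)) = p ^ 2"
    and "card (derived G (carrier G) \<inter> center G) = p"
  shows "nilpotent_of_class G 3 \<and>
    (\<exists>P A. subgroup P G \<and> subgroup A G \<and>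
       G \<cong> (G\<lparr>carrier := P\<rparr> \<times>\<times> G\<lparr>carrier := A\<rparr>) \<and>
       comm_group (G\<lparr>carrier := A\<rparr>) \<and>
       (\<exists>k. card P = p ^ k) \<and>
       card (derived (G\<lparr>carrier := P\<rparr>) P) = p ^ 2 \<and>
       card (derived (G\<lparr>carrier := P\<rparr>) P \<inter> center (G\<lparr>carrier := P\<rparr>)) = p)"
proof -
  interpret derived_order_p_square G p
    using assms by (simp add: derived_order_p_square_def derived_order_p_square_axioms_def)
  show ?thesis using nilpotent_of_class_3 p_elements_direct_factor by blast
qed

end
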